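(* For every positive integer $\ell$, there exist integers $p_1,\dots,p_\ell$ with $j\le p_j\le j(j+1)$ for all $1\le j\le\ell$ such that the $\ell\times\ell$ matrix $A(\{p_j\}_{j=1}^\ell)$ with entries $A_{ij}=C_{p_j}(i)$, $i,j\in[\ell]$, is invertible.
   Context: For a positive integer $p$ and $y\ge0$, $C_p(y)=p\,(1-(1-1/p)^y)$. *)

theory Defs
  imports Complex_Main "Jordan_Normal_Form.Matrix"
begin

definition C :: "nat \<Rightarrow> real \<Rightarrow> real" where
  "C p y = real p * (1 - (1 - 1 / real p) powr y)"

definition Amat :: "nat \<Rightarrow> (nat \<Rightarrow> nat) \<Rightarrow> real mat" where
  "Amat l p = mat l l (\<lambda>(i, j). C (p (j + 1)) (real (i + 1)))"

end

theory Submission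
  imports Defs "Jordan_Normal_Form.Determinant" "HOL-Computational_Algebra.Polynomial"
begin

text \<open>For integer y \<ge> 1 one has C_p(y) = p (1 - q^y) with q = 1 - 1/p, and p (1 - q) = 1.
  Subtracting consecutive rows of A (with an all-zero row before the first) therefore turns
  A into the Vandermonde matrix (q_j^k), which is invertible as soon as the p_j are distinct.
  So any distinct positive p_j work; p_j = j satisfies the required bounds.\<close>

lemma vandermonde_combination_eq_zero:
  fixes q w :: "nat \<Rightarrow> 'a :: idom"
  assumes inj: "inj_on q {..<l}"
    and zero: "\<And>k. k < l \<Longrightarrow> (\<Sum>j<l. w j * q j ^ k) = 0"
    and "j0 < l"
  shows "w j0 = 0"
proof -
  \<comment> \<open>Combine the relations with the coefficients of the polynomial vanishing at every
    node except the j0-th.\<close>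
  define P where "P = (\<Prod>j\<in>{..<l} - {j0}. [:- q j, 1:])"
  have "degree P = l - 1"
    unfolding P_def using \<open>j0 < l\<close> by (subst degree_prod_eq_sum_degree) auto
  then have poly_P: "poly P x = (\<Sum>k<l. coeff P k * x ^ k)" for x
    using \<open>j0 < l\<close>
    by (simp add: poly_altdef atMost_atLeast0 lessThan_atLeast0
        atLeastLessThanSuc_atLeastAtMost[symmetric])
  have "w j0 * poly P (q j0) = (\<Sum>j<l. w j * poly P (q j))"
    using \<open>j0 < l\<close> by (subst sum.remove[of _ j0]) (auto simp: P_def poly_prod intro!: sum.neutral)
  also have "\<dots> = (\<Sum>k<l. coeff P k * (\<Sum>j<l. w j * q j ^ k))"
    unfolding poly_P sum_distrib_left sum_distrib_right
    by (subst sum.swap) (auto intro!: sum.cong)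
  also have "\<dots> = 0"
    using zero by simp
  finally show ?thesis
    unfolding P_def poly_prod using inj \<open>j0 < l\<close> by (auto simp: inj_on_def)
qed

lemma invertible_mat_if_kernel_trivial:
  fixes A :: "'a :: field mat"
  assumes A: "A \<in> carrier_mat n n"
    and kernel: "\<And>v. v \<in> carrier_vec n \<Longrightarrow> A *\<^sub>v v = 0\<^sub>v n \<Longrightarrow> v = 0\<^sub>v n"
  shows "invertible_mat A"
proof -
  have "det A \<noteq> 0"
    using kernel det_0_iff_vec_prod_zero_field[OF A] by blast
  then have "A \<in> Units (ring_mat TYPE('a) n ())"
    by (rule det_non_zero_imp_unit[OF A])
  then obtain B where "B \<in> carrier_mat n n" "B * A = 1\<^sub>m n" "A * B = 1\<^sub>m n"
    unfolding Units_def ring_mat_def by auto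
  with A show ?thesis
    unfolding invertible_mat_def inverts_mat_def by auto
qed

lemma invertible_mat_one_minus_powers:
  fixes c q :: "nat \<Rightarrow> 'a :: field"
  assumes inj: "inj_on q {..<l}"
    and nonzero: "\<And>j. j < l \<Longrightarrow> c j \<noteq> 0 \<and> q j \<noteq> 1"
  shows "invertible_mat (mat l l (\<lambda>(i, j). c j * (1 - q j ^ Suc i)))"
    (is "invertible_mat ?A")
proof (rule invertible_mat_if_kernel_trivial)
  show "?A \<in> carrier_mat l l" by simp
  fix v assume v: "v \<in> carrier_vec l" and kernel: "?A *\<^sub>v v = 0\<^sub>v l"
  define S where "S k = (\<Sum>j<l. c j * (1 - q j ^ k) * v $ j)" for k
  have S_zero: "S k = 0" if "k \<le> l" for k
  proof (cases k)
    case (Suc i)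
    with that have "(?A *\<^sub>v v) $ i = S k"
      using v by (simp add: S_def scalar_prod_def lessThan_atLeast0 mult.assoc)
    with kernel Suc that show ?thesis by simp
  qed (simp add: S_def)
  \<comment> \<open>Consecutive differences of the rows form a Vandermonde system in the weights c j (1 - q j) v j.\<close>
  have "(\<Sum>j<l. (c j * (1 - q j) * v $ j) * q j ^ k) = S (Suc k) - S k" for k
    unfolding S_def by (subst sum_subtractf[symmetric]) (auto intro!: sum.cong simp: algebra_simps)
  with S_zero have "(\<Sum>j<l. (c j * (1 - q j) * v $ j) * q j ^ k) = 0" if "k < l" for k
    using that by simp
  then have "c j * (1 - q j) * v $ j = 0" if "j < l" for j
    using vandermonde_combination_eq_zero[OF inj _ that, of "\<lambda>j. c j * (1 - q j) * v $ j"]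
    by blast
  then show "v = 0\<^sub>v l"
    using v nonzero by (intro eq_vecI) auto
qed

lemma C_Suc: "C p (real (Suc n)) = real p * (1 - (1 - 1 / real p) ^ Suc n)"
proof (cases "p \<le> 1")
  case True
  then show ?thesis by (cases p) (auto simp: C_def)
next
  case False
  then show ?thesis
    unfolding C_def by (subst powr_realpow) auto
qed

lemma invertible_Amat:
  assumes inj: "inj_on p {1..l}" and pos: "\<And>j. j \<in> {1..l} \<Longrightarrow> p j \<ge> 1"
  shows "invertible_mat (Amat l p)"
proof -
  define c where "c j = real (p (Suc j))" for j
  define q where "q j = 1 - 1 / c j" for j
  have "inj_on q {..<l}"
  proof (rule inj_onI)
    fix a b assume "a \<in> {..<l}" "b \<in> {..<l}" "q a = q b"
    then have "p (Suc a) = p (Suc b)"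
      by (simp add: q_def c_def)
    with inj \<open>a \<in> {..<l}\<close> \<open>b \<in> {..<l}\<close> show "a = b"
      by (auto dest: inj_onD)
  qed
  moreover have "c j \<noteq> 0 \<and> q j \<noteq> 1" if "j < l" for j
    using pos[of "Suc j"] that by (simp add: q_def c_def)
  ultimately have "invertible_mat (mat l l (\<lambda>(i, j). c j * (1 - q j ^ Suc i)))"
    by (rule invertible_mat_one_minus_powers)
  also have "mat l l (\<lambda>(i, j). c j * (1 - q j ^ Suc i)) = Amat l p"
    unfolding Amat_def c_def q_def by (simp add: C_Suc del: of_nat_Suc)
  finally show ?thesis .
qed

theorem lemma8:
  fixes l :: nat
  assumes "l \<ge> 1"
  shows "\<exists>p :: nat \<Rightarrow> nat. (\<forall>j \<in> {1..l}. j \<le> p j \<and> p j \<le> j * (j + 1))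
           \<and> invertible_mat (Amat l p)"
proof (intro exI conjI)
  show "\<forall>j \<in> {1..l}. j \<le> id j \<and> id j \<le> j * (j + 1)" by simp
  show "invertible_mat (Amat l id)" by (rule invertible_Amat) auto
qed

end
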